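(* For a word $w=w_1\cdots w_n$ over $\{1,2,3\}$ let $s(w)=|\{i : 1\le i\le n-2,\ w_{i+2}-w_i=2\}|$ (the number of occurrences of the place-difference-value pattern $(12,(\mathbb{P},\{2\},\mathbb{P}),\{(1,2,\{2\})\},(\mathbb{P},\mathbb{P}))$). Then $$\sum_{w\in\{1,2,3\}^*} q^{|w|}z^{s(w)}=\frac{1}{\bigl(1-q^2(1-z)\bigr)\bigl(1-3q-q^2(z-1)\bigr)},$$ where the sum is over all finite words (including the empty word) and $|w|$ is the length of $w$. *)

theory Defs
  imports "HOL-Computational_Algebra.Formal_Power_Series"
begin

text \<open>Words over the alphabet {1,2,3}, as lists of naturals; the letter w_i (1-indexed)
  is w ! (i - 1).\<close>
definition words :: "nat \<Rightarrow> nat list set" where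
  "words n = {w. length w = n \<and> set w \<subseteq> {1,2,3}}"

definition s_stat :: "nat list \<Rightarrow> nat" where
  "s_stat w = card {i. 1 \<le> i \<and> i + 2 \<le> length w \<and>
                      int (w ! (i + 1)) - int (w ! (i - 1)) = 2}"

end

theory Submission
  imports Defs
begin

text \<open>Prepending a letter c to a word w creates a new occurrence of the pattern exactly when
  c = 1 and the second letter of w is 3.  So the generating function A of all words is coupled to
  the generating function S of words whose second letter is 3; in turn S is coupled to the
  generating functions F and FF of words starting with 3 and with 33.  Prepending letters gives the
  linear system A = 1 + q (3 A + (z - 1) S), S = q (3 F + (z - 1) FF), F = q A, FF = q F,
  whose solution is the stated rational function.\<close>

lemma words_0: "words 0 = {[]}"
  by (auto simp: words_def)

lemma words_Suc: "words (Suc n) = (\<lambda>(c, w). c # w) ` ({1,2,3} \<times> words n)"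
  by (auto simp: words_def length_Suc_conv)

lemma sum_words_Suc:
  "(\<Sum>w\<in>words (Suc n). g w) = (\<Sum>w\<in>words n. g (1 # w) + g (2 # w) + g (3 # w))"
proof -
  have "inj_on (\<lambda>(c, w). c # w) ({1,2,3::nat} \<times> words n)"
    by (auto simp: inj_on_def)
  hence "(\<Sum>w\<in>words (Suc n). g w) = (\<Sum>(c, w)\<in>{1,2,3} \<times> words n. g (c # w))"
    unfolding words_Suc by (simp add: sum.reindex case_prod_unfold)
  also have "\<dots> = (\<Sum>c\<in>{1,2,3}. \<Sum>w\<in>words n. g (c # w))"
    by (simp add: sum.cartesian_product)
  finally show ?thesis
    by (simp add: sum.distrib add.assoc)
qed

lemma s_stat_Cons:
  "s_stat (c # w) = s_stat w + (if 2 \<le> length w \<and> int (w ! 1) - int c = 2 then 1 else 0)"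
proof -
  define S where "S w = {i. 1 \<le> i \<and> i + 2 \<le> length w \<and> int (w ! (i + 1)) - int (w ! (i - 1)) = 2}"
    for w :: "nat list"
  have "S (c # w) = Suc ` S w \<union> {i. i = 1 \<and> 2 \<le> length w \<and> int (w ! 1) - int c = 2}"
    (is "_ = ?rhs")
  proof (rule set_eqI)
    fix i
    show "i \<in> S (c # w) \<longleftrightarrow> i \<in> ?rhs"
      by (cases i) (auto simp: S_def inj_image_mem_iff nth_Cons')
  qed
  moreover have "finite (S w)"
    unfolding S_def by (rule finite_subset[of _ "{..length w}"]) auto
  moreover have "1 \<notin> Suc ` S w"
    by (auto simp: S_def)
  ultimately show ?thesis
    unfolding s_stat_def S_def[symmetric] by (auto simp: card_image)
qed

lemma letter_jump_iff:
  assumes "c \<in> {1,2,3}" and "b \<in> {1,2,3}"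
  shows "int b - int c = 2 \<longleftrightarrow> c = 1 \<and> b = 3"
  using assms by (simp only: insert_iff empty_iff) (elim disjE; simp)

lemma s_stat_Cons_letter:
  assumes "c \<in> {1,2,3}" and "w \<in> words n"
  shows "s_stat (c # w) = s_stat w + (if c = 1 \<and> (\<exists>a u. w = a # 3 # u) then 1 else 0)"
proof -
  have "2 \<le> length w \<and> int (w ! 1) - int c = 2 \<longleftrightarrow> c = 1 \<and> (\<exists>a u. w = a # 3 # u)"
  proof (cases w rule: remdups_adj.cases)
    case (3 a b u)
    with assms(2) have "b \<in> {1,2,3}" by (auto simp: words_def)
    with assms(1) 3 show ?thesis by (simp add: letter_jump_iff)
  qed auto
  thus ?thesis by (simp add: s_stat_Cons)
qed

lemma Abs_fps_conv_X_mult: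
  fixes f :: "nat \<Rightarrow> 'a::ring_1"
  shows "Abs_fps f = fps_const (f 0) + fps_X * Abs_fps (\<lambda>n. f (Suc n))"
  by (simp add: fps_eq_iff)

context
  fixes z :: "'a::comm_ring_1"
begin

definition weight_sum :: "(nat list \<Rightarrow> bool) \<Rightarrow> nat \<Rightarrow> 'a" where
  "weight_sum P n = (\<Sum>w\<in>words n. if P w then z ^ s_stat w else 0)"

lemma weight_sum_0: "weight_sum P 0 = (if P [] then 1 else 0)"
  by (simp add: weight_sum_def words_0 s_stat_def)

lemma weight_sum_all_Suc:
  "weight_sum (\<lambda>_. True) (Suc n) =
     3 * weight_sum (\<lambda>_. True) n + (z - 1) * weight_sum (\<lambda>w. \<exists>a u. w = a # 3 # u) n"
proof -
  have "weight_sum (\<lambda>_. True) (Suc n) =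
          (\<Sum>w\<in>words n. 3 * z ^ s_stat w
                        + (z - 1) * (if \<exists>a u. w = a # 3 # u then z ^ s_stat w else 0))"
    unfolding weight_sum_def sum_words_Suc
    by (rule sum.cong) (auto simp: s_stat_Cons_letter algebra_simps)
  thus ?thesis
    by (simp add: weight_sum_def sum.distrib sum_distrib_left)
qed

lemma weight_sum_first_3_Suc:
  "weight_sum (\<lambda>w. \<exists>u. w = 3 # u) (Suc n) = weight_sum (\<lambda>_. True) n"
  unfolding weight_sum_def sum_words_Suc by (rule sum.cong) (simp_all add: s_stat_Cons_letter)

lemma weight_sum_second_3_Suc:
  "weight_sum (\<lambda>w. \<exists>a u. w = a # 3 # u) (Suc n) =
     3 * weight_sum (\<lambda>w. \<exists>u. w = 3 # u) n + (z - 1) * weight_sum (\<lambda>w. \<exists>u. w = 3 # 3 # u) n"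
proof -
  have "weight_sum (\<lambda>w. \<exists>a u. w = a # 3 # u) (Suc n) =
          (\<Sum>w\<in>words n. 3 * (if \<exists>u. w = 3 # u then z ^ s_stat w else 0)
                        + (z - 1) * (if \<exists>u. w = 3 # 3 # u then z ^ s_stat w else 0))"
    unfolding weight_sum_def sum_words_Suc
    by (rule sum.cong) (auto simp: s_stat_Cons_letter algebra_simps)
  thus ?thesis
    by (simp add: weight_sum_def sum.distrib sum_distrib_left)
qed

lemma weight_sum_first_33_Suc:
  "weight_sum (\<lambda>w. \<exists>u. w = 3 # 3 # u) (Suc n) = weight_sum (\<lambda>w. \<exists>u. w = 3 # u) n"
  unfolding weight_sum_def sum_words_Suc by (rule sum.cong) (simp_all add: s_stat_Cons_letter)

definition weight_fps :: "(nat list \<Rightarrow> bool) \<Rightarrow> 'a fps" where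
  "weight_fps P = Abs_fps (weight_sum P)"

lemma weight_fps_all:
  "weight_fps (\<lambda>_. True) =
     1 + fps_X * (3 * weight_fps (\<lambda>_. True)
                  + fps_const (z - 1) * weight_fps (\<lambda>w. \<exists>a u. w = a # 3 # u))"
  unfolding weight_fps_def
  by (subst Abs_fps_conv_X_mult)
    (simp add: weight_sum_0 weight_sum_all_Suc fps_eq_iff numeral_fps_const)

lemma weight_fps_first_3:
  "weight_fps (\<lambda>w. \<exists>u. w = 3 # u) = fps_X * weight_fps (\<lambda>_. True)"
  unfolding weight_fps_def
  by (subst Abs_fps_conv_X_mult) (simp add: weight_sum_0 weight_sum_first_3_Suc fps_eq_iff)

lemma weight_fps_second_3:
  "weight_fps (\<lambda>w. \<exists>a u. w = a # 3 # u) =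
     fps_X * (3 * weight_fps (\<lambda>w. \<exists>u. w = 3 # u)
              + fps_const (z - 1) * weight_fps (\<lambda>w. \<exists>u. w = 3 # 3 # u))"
  unfolding weight_fps_def
  by (subst Abs_fps_conv_X_mult)
    (simp add: weight_sum_0 weight_sum_second_3_Suc fps_eq_iff numeral_fps_const)

lemma weight_fps_first_33:
  "weight_fps (\<lambda>w. \<exists>u. w = 3 # 3 # u) = fps_X * weight_fps (\<lambda>w. \<exists>u. w = 3 # u)"
  unfolding weight_fps_def
  by (subst Abs_fps_conv_X_mult) (simp add: weight_sum_0 weight_sum_first_33_Suc fps_eq_iff)

end

theorem mainTheorem3:
  fixes z :: "'a :: field"
  shows "Abs_fps (\<lambda>n. \<Sum>w\<in>words n. z ^ s_stat w) =
         inverse ((1 - fps_X ^ 2 * fps_const (1 - z)) *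
                  (1 - 3 * fps_X - fps_X ^ 2 * fps_const (z - 1)))"
proof -
  define A where "A = weight_fps z (\<lambda>_. True)"
  define F where "F = weight_fps z (\<lambda>w. \<exists>u. w = 3 # u)"
  define S where "S = weight_fps z (\<lambda>w. \<exists>a u. w = a # 3 # u)"
  define FF where "FF = weight_fps z (\<lambda>w. \<exists>u. w = 3 # 3 # u)"
  have "fps_const (1 - z) = - fps_const (z - 1)"
    by (metis fps_const_neg minus_diff_eq)
  moreover have "A = 1 + fps_X * (3 * A + fps_const (z - 1) * S)"
    and "F = fps_X * A" and "S = fps_X * (3 * F + fps_const (z - 1) * FF)" and "FF = fps_X * F"
    unfolding A_def F_def S_def FF_def
    by (fact weight_fps_all weight_fps_first_3 weight_fps_second_3 weight_fps_first_33)+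
  ultimately have "((1 - fps_X ^ 2 * fps_const (1 - z)) *
                    (1 - 3 * fps_X - fps_X ^ 2 * fps_const (z - 1))) * A = 1"
    by algebra
  hence "inverse ((1 - fps_X ^ 2 * fps_const (1 - z)) *
                  (1 - 3 * fps_X - fps_X ^ 2 * fps_const (z - 1))) = A"
    by (rule fps_inverse_unique)
  thus ?thesis
    by (simp add: A_def weight_fps_def weight_sum_def[abs_def])
qed

end
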